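(* Let $\kappa$ be a regular uncountable cardinal and $I$ an ideal on $\kappa$. If $I\restriction A$ is pleasant for every $A\in I^+$, then $I$ is normal.
   Context: An ideal on $\kappa$ is a family of subsets of $\kappa$ closed under subsets and finite unions, which is $<\kappa$-complete and contains all singletons. $I^+=\{X\subseteq\kappa: X\notin I\}$. For $A\in I^+$, $I\restriction A=\{X\subseteq\kappa: X\cap A\in I\}$. For $A\subseteq\kappa$ and $X_\alpha\subseteq\kappa$, $\bigtriangledown_{\alpha\in A}X_\alpha=\{\xi<\kappa:\exists\alpha<\xi\,(\alpha\in A\wedge \xi\in X_\alpha)\}$. $I$ is normal if $X_\alpha\in I$ for all $\alpha<\kappa$ implies $\bigtriangledown_{\alpha<\kappa}X_\alpha\in I$. $I$ is pleasant if whenever $A\in I$ and $X_\alpha\in I$ for all $\alpha$, then $\bigtriangledown_{\alpha\in A}X_\alpha\in I$. *)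

theory Defs
  imports Main
begin

unbundle cardinal_syntax

text \<open>A cardinal kappa is represented by a cardinal well-order r (Card_order r);
  the ordinals below kappa are the elements of Field r, and alpha < xi means
  (alpha, xi) in r with alpha distinct from xi.  Subsets of kappa are subsets of Field r.\<close>

definition is_ideal :: "'a rel \<Rightarrow> 'a set set \<Rightarrow> bool" where
  "is_ideal r I \<longleftrightarrow>
     I \<subseteq> Pow (Field r) \<and>
     (\<forall>X Y. X \<in> I \<and> Y \<subseteq> X \<longrightarrow> Y \<in> I) \<and>
     (\<forall>X Y. X \<in> I \<and> Y \<in> I \<longrightarrow> X \<union> Y \<in> I) \<and>
     (\<forall>F. F \<subseteq> I \<and> |F| <o r \<longrightarrow> \<Union>F \<in> I) \<and>
     (\<forall>\<xi>\<in>Field r. {\<xi>} \<in> I)"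

definition ideal_pos :: "'a rel \<Rightarrow> 'a set set \<Rightarrow> 'a set set" where
  "ideal_pos r I = {X. X \<subseteq> Field r \<and> X \<notin> I}"

definition ideal_restr :: "'a rel \<Rightarrow> 'a set set \<Rightarrow> 'a set \<Rightarrow> 'a set set" where
  "ideal_restr r I A = {X. X \<subseteq> Field r \<and> X \<inter> A \<in> I}"

definition diag_union :: "'a rel \<Rightarrow> 'a set \<Rightarrow> ('a \<Rightarrow> 'a set) \<Rightarrow> 'a set" where
  "diag_union r A X = {\<xi> \<in> Field r. \<exists>\<alpha>. (\<alpha>, \<xi>) \<in> r \<and> \<alpha> \<noteq> \<xi> \<and> \<alpha> \<in> A \<and> \<xi> \<in> X \<alpha>}"

definition normal_ideal :: "'a rel \<Rightarrow> 'a set set \<Rightarrow> bool" where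
  "normal_ideal r I \<longleftrightarrow>
     (\<forall>X. (\<forall>\<alpha>\<in>Field r. X \<alpha> \<in> I) \<longrightarrow> diag_union r (Field r) X \<in> I)"

definition pleasant_ideal :: "'a rel \<Rightarrow> 'a set set \<Rightarrow> bool" where
  "pleasant_ideal r I \<longleftrightarrow>
     (\<forall>A X. A \<in> I \<and> (\<forall>\<alpha>\<in>Field r. X \<alpha> \<in> I) \<longrightarrow> diag_union r A X \<in> I)"

end

theory Submission
  imports Defs
begin

(* Suppose every X \<alpha> lies in I and let D be their diagonal union. Choose a regressive f on D
   with \<xi> \<in> X (f \<xi>). If B \<subseteq> D is I-positive and disjoint from f ` B, then f ` B is null in
   I \<restriction> B. *)

lemma ordLess_Field_nonempty: "p <o r \<Longrightarrow> Field r \<noteq> {}"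
  by (metis embed_def empty_iff ordLess_not_embed)

lemma is_ideal_Pow: "is_ideal r I \<Longrightarrow> I \<subseteq> Pow (Field r)"
  by (simp add: is_ideal_def)

lemma is_ideal_mono: "is_ideal r I \<Longrightarrow> X \<in> I \<Longrightarrow> Y \<subseteq> X \<Longrightarrow> Y \<in> I"
  by (simp add: is_ideal_def)

lemma is_ideal_Un: "is_ideal r I \<Longrightarrow> X \<in> I \<Longrightarrow> Y \<in> I \<Longrightarrow> X \<union> Y \<in> I"
  by (simp add: is_ideal_def)

lemma is_ideal_singleton: "is_ideal r I \<Longrightarrow> \<xi> \<in> Field r \<Longrightarrow> {\<xi>} \<in> I"
  by (simp add: is_ideal_def)

lemma is_ideal_empty:
  assumes "is_ideal r I" and "Field r \<noteq> {}"
  shows "{} \<in> I"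
proof -
  obtain \<xi> where "\<xi> \<in> Field r" using assms(2) by blast
  then have "{\<xi>} \<in> I" by (rule is_ideal_singleton[OF assms(1)])
  then show ?thesis using assms(1) is_ideal_mono by blast
qed

lemma in_ideal_restr_if_in_ideal:
  assumes "is_ideal r I" and "X \<in> I"
  shows "X \<in> ideal_restr r I B"
proof -
  have "X \<subseteq> Field r" using is_ideal_Pow[OF assms(1)] assms(2) by blast
  moreover have "X \<inter> B \<in> I" using is_ideal_mono[OF assms] by blast
  ultimately show ?thesis unfolding ideal_restr_def by blast
qed

lemma in_ideal_restr_if_disjoint:
  assumes "{} \<in> I" and "A \<subseteq> Field r" and "A \<inter> B = {}"
  shows "A \<in> ideal_restr r I B"
  using assms unfolding ideal_restr_def by simp

lemma diag_union_disjoint_in_ideal_restr: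
  assumes "is_ideal r I" and "{} \<in> I"
    and "pleasant_ideal r (ideal_restr r I B)"
    and "A \<subseteq> Field r" and "A \<inter> B = {}"
    and "\<forall>\<alpha>\<in>Field r. X \<alpha> \<in> I"
  shows "diag_union r A X \<inter> B \<in> I"
proof -
  have "A \<in> ideal_restr r I B"
    using assms(2,4,5) by (rule in_ideal_restr_if_disjoint)
  moreover have "\<forall>\<alpha>\<in>Field r. X \<alpha> \<in> ideal_restr r I B"
    using assms(1,6) in_ideal_restr_if_in_ideal by blast
  ultimately have "diag_union r A X \<in> ideal_restr r I B"
    using assms(3) unfolding pleasant_ideal_def by blast
  then show ?thesis unfolding ideal_restr_def by blast
qed

lemma in_ideal_if_disjoint_from_regressive_image:
  assumes "is_ideal r I" and "{} \<in> I"
    and "\<forall>A \<in> ideal_pos r I. pleasant_ideal r (ideal_restr r I A)"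
    and "\<forall>\<alpha>\<in>Field r. X \<alpha> \<in> I"
    and f: "\<And>\<xi>. \<xi> \<in> B \<Longrightarrow> (f \<xi>, \<xi>) \<in> r - Id \<and> \<xi> \<in> X (f \<xi>)"
    and "f ` B \<inter> B = {}"
  shows "B \<in> I"
proof (rule ccontr)
  assume "B \<notin> I"
  moreover have "B \<subseteq> Field r" using f by (blast intro: FieldI2)
  ultimately have "pleasant_ideal r (ideal_restr r I B)"
    using assms(3) unfolding ideal_pos_def by blast
  moreover have "f ` B \<subseteq> Field r" using f by (blast intro: FieldI1)
  ultimately have "diag_union r (f ` B) X \<inter> B \<in> I"
    using diag_union_disjoint_in_ideal_restr assms(1,2,4,6) by blast
  moreover have "B \<subseteq> diag_union r (f ` B) X"
    using f \<open>B \<subseteq> Field r\<close> unfolding diag_union_def by blast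
  ultimately show False using \<open>B \<notin> I\<close> by (simp add: Int_absorb1)
qed

lemma wf_regressive_funpow_leaves:
  assumes "wf R" and "\<And>x. x \<in> D \<Longrightarrow> (f x, x) \<in> R"
  shows "\<exists>k. (f ^^ k) x \<notin> D"
proof (rule ccontr)
  assume "\<nexists>k. (f ^^ k) x \<notin> D"
  then have "\<forall>i. ((f ^^ Suc i) x, (f ^^ i) x) \<in> R" using assms(2) by simp
  then have "\<exists>g. \<forall>i. (g (Suc i), g i) \<in> R" by (rule exI[of _ "\<lambda>i. (f ^^ i) x"])
  then show False using assms(1) unfolding wf_iff_no_infinite_down_chain by blast
qed

(* Colour x by the parity of the least k with (f ^^ k) x \<notin> D; this count drops by one along f. *)
lemma wf_regressive_two_colouring:
  assumes "wf R" and "\<And>x. x \<in> D \<Longrightarrow> (f x, x) \<in> R"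
  obtains B\<^sub>0 B\<^sub>1 where "D = B\<^sub>0 \<union> B\<^sub>1" and "f ` B\<^sub>0 \<inter> B\<^sub>0 = {}" and "f ` B\<^sub>1 \<inter> B\<^sub>1 = {}"
proof -
  define n where "n x = (LEAST k. (f ^^ k) x \<notin> D)" for x
  have n_step: "n x = Suc (n (f x))" if "x \<in> D" for x
  proof -
    obtain k where "(f ^^ k) x \<notin> D" using wf_regressive_funpow_leaves[OF assms] by blast
    then have "n x = Suc (LEAST m. (f ^^ Suc m) x \<notin> D)"
      unfolding n_def by (rule Least_Suc) (use that in simp)
    then show ?thesis unfolding n_def by (simp add: funpow_Suc_right del: funpow.simps)
  qed
  show ?thesis
  proof
    show "D = {x \<in> D. even (n x)} \<union> {x \<in> D. odd (n x)}" by blast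
    show "f ` {x \<in> D. even (n x)} \<inter> {x \<in> D. even (n x)} = {}" using n_step by auto
    show "f ` {x \<in> D. odd (n x)} \<inter> {x \<in> D. odd (n x)} = {}" using n_step by auto
  qed
qed

theorem theorem2p4:
  fixes r :: "'a rel" and I :: "'a set set"
  assumes "Card_order r" and "regularCard r" and "(natLeq, r) \<in> ordLess"
    and "is_ideal r I"
    and "\<forall>A \<in> ideal_pos r I. pleasant_ideal r (ideal_restr r I A)"
  shows "normal_ideal r I"
  unfolding normal_ideal_def
proof (intro allI impI)
  fix X assume X_null: "\<forall>\<alpha>\<in>Field r. X \<alpha> \<in> I"
  define D where "D = diag_union r (Field r) X"
  have "\<forall>\<xi>\<in>D. \<exists>\<alpha>. (\<alpha>, \<xi>) \<in> r - Id \<and> \<xi> \<in> X \<alpha>"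
    unfolding D_def diag_union_def by blast
  then obtain f where f: "\<And>\<xi>. \<xi> \<in> D \<Longrightarrow> (f \<xi>, \<xi>) \<in> r - Id \<and> \<xi> \<in> X (f \<xi>)"
    by (metis bchoice)
  have wf: "wf (r - Id)"
    using assms(1) unfolding card_order_on_def well_order_on_def by blast
  have empty_null: "{} \<in> I"
    using assms(4) ordLess_Field_nonempty[OF assms(3)[folded ordLess_def]] by (rule is_ideal_empty)
  have colour_null: "B \<in> I" if "B \<subseteq> D" and "f ` B \<inter> B = {}" for B
    by (rule in_ideal_if_disjoint_from_regressive_image[OF assms(4) empty_null assms(5) X_null])
      (use f that in blast)+
  have f_regressive: "\<And>\<xi>. \<xi> \<in> D \<Longrightarrow> (f \<xi>, \<xi>) \<in> r - Id" using f by blast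
  obtain B\<^sub>0 B\<^sub>1 where D_split: "D = B\<^sub>0 \<union> B\<^sub>1"
    and B\<^sub>0_disjoint: "f ` B\<^sub>0 \<inter> B\<^sub>0 = {}" and B\<^sub>1_disjoint: "f ` B\<^sub>1 \<inter> B\<^sub>1 = {}"
    by (rule wf_regressive_two_colouring[OF wf f_regressive])
  have "B\<^sub>0 \<in> I" using colour_null[OF _ B\<^sub>0_disjoint] D_split by blast
  moreover have "B\<^sub>1 \<in> I" using colour_null[OF _ B\<^sub>1_disjoint] D_split by blast
  ultimately have "D \<in> I" unfolding D_split by (rule is_ideal_Un[OF assms(4)])
  then show "diag_union r (Field r) X \<in> I" unfolding D_def .
qed

end
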